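(* For all integers $d\ge 3$ and $0\le j\le \left\lfloor \frac{3(d-1)}{2}\right\rfloor$, $$\operatorname{sign}(d,j)=\operatorname{triv}(d-2,j-3).$$
   Context: $\Bbbk$ is an algebraically closed field of characteristic $0$. For an integer $d\ge 1$, $A(d)=\Bbbk[x_1,x_2,x_3]/(x_1^d,x_2^d,x_3^d)=\bigoplus_j A(d)_j$ with its standard grading, where $A(d)_j=0$ for $j<0$ (so $A(1)=\Bbbk$ in degree $0$). $S_3$ acts on $A(d)$ by permuting variables. The linear map $E:A(d)_{j+1}\to A(d)_j$ is defined on the monomial basis by $E(x_1^{a_1}x_2^{a_2}x_3^{a_3})=\sum_{k=1}^{3} a_k(d-a_k)\,x_1^{a_1}\cdots x_k^{a_k-1}\cdots x_3^{a_3}$; it commutes with the $S_3$-action. $\operatorname{triv}(d,j)$ and $\operatorname{sign}(d,j)$ denote the multiplicities of the trivial and sign representations of $S_3$ in $\operatorname{Ker}(E)\cap A(d)_j$ (zero when $j<0$). *)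

theory Defs
  imports Main "HOL-Library.Function_Algebras" "HOL-Combinatorics.Permutations" "HOL-Computational_Algebra.Polynomial"
begin

text \<open>A monomial x1^a0 x2^a1 x3^a2 is represented by its exponent vector
  a :: nat => nat, with a i = 0 for i >= 3 (variables indexed 0,1,2).
  An element of A(d) is a coefficient function on exponent vectors.\<close>

definition mons :: "nat \<Rightarrow> nat \<Rightarrow> (nat \<Rightarrow> nat) set" where
  "mons d j = {a. (\<forall>i<3. a i < d) \<and> (\<forall>i\<ge>3. a i = 0) \<and> a 0 + a 1 + a 2 = j}"

definition Acomp :: "nat \<Rightarrow> nat \<Rightarrow> ((nat \<Rightarrow> nat) \<Rightarrow> 'k::field) set" where
  "Acomp d j = {f. \<forall>a. a \<notin> mons d j \<longrightarrow> f a = 0}"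

text \<open>Coefficient of the monomial b in E(x^a).\<close>
definition Ecoef :: "nat \<Rightarrow> (nat \<Rightarrow> nat) \<Rightarrow> (nat \<Rightarrow> nat) \<Rightarrow> 'k::field" where
  "Ecoef d a b = (\<Sum>k<3. if 1 \<le> a k \<and> b = a(k := a k - 1)
                          then of_nat (a k * (d - a k)) else 0)"

definition Emap :: "nat \<Rightarrow> nat \<Rightarrow> ((nat \<Rightarrow> nat) \<Rightarrow> 'k::field) \<Rightarrow> ((nat \<Rightarrow> nat) \<Rightarrow> 'k)" where
  "Emap d j f = (\<lambda>b. \<Sum>a\<in>mons d j. f a * Ecoef d a b)"

definition kerE :: "nat \<Rightarrow> nat \<Rightarrow> ((nat \<Rightarrow> nat) \<Rightarrow> 'k::field) set" where
  "kerE d j = {f \<in> Acomp d j. Emap d j f = (\<lambda>_. 0)}"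

text \<open>Action of a permutation s of {0,1,2} (i.e. of S_3) on A(d):
  s sends x_i to x_(s i), hence (s.f)(b) = f (b o s).\<close>
definition act :: "(nat \<Rightarrow> nat) \<Rightarrow> ((nat \<Rightarrow> nat) \<Rightarrow> 'k) \<Rightarrow> ((nat \<Rightarrow> nat) \<Rightarrow> 'k)" where
  "act s f = (\<lambda>b. f (b \<circ> s))"

definition fscale :: "'k::field \<Rightarrow> ((nat \<Rightarrow> nat) \<Rightarrow> 'k) \<Rightarrow> ((nat \<Rightarrow> nat) \<Rightarrow> 'k)" where
  "fscale c f = (\<lambda>x. c * f x)"

text \<open>Multiplicity of the trivial representation = dim Hom_S3(triv, V) = dim of
  the S_3-fixed subspace; multiplicity of the sign representation = dim of the
  subspace on which S_3 acts by the sign character.\<close>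
definition triv :: "'k::field itself \<Rightarrow> nat \<Rightarrow> int \<Rightarrow> nat" where
  "triv K d j = (if j < 0 then 0 else
     vector_space.dim (fscale :: 'k \<Rightarrow> _)
       {f \<in> (kerE d (nat j) :: ((nat \<Rightarrow> nat) \<Rightarrow> 'k) set).
          \<forall>s. s permutes {0,1,2::nat} \<longrightarrow> act s f = f})"

definition sgn_mult :: "'k::field itself \<Rightarrow> nat \<Rightarrow> int \<Rightarrow> nat" where
  "sgn_mult K d j = (if j < 0 then 0 else
     vector_space.dim (fscale :: 'k \<Rightarrow> _)
       {f \<in> (kerE d (nat j) :: ((nat \<Rightarrow> nat) \<Rightarrow> 'k) set).
          \<forall>s. s permutes {0,1,2::nat} \<longrightarrow> act s f = fscale (of_int (sign s)) f})"

definition alg_closed :: "'k::field itself \<Rightarrow> bool" where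
  "alg_closed K \<longleftrightarrow> (\<forall>p :: 'k poly. degree p \<ge> 1 \<longrightarrow> (\<exists>x. poly p x = 0))"

end

theory Submission
  imports Defs
begin

text \<open>Let \<open>F\<close> be multiplication by \<open>x\<^sub>1 + x\<^sub>2 + x\<^sub>3\<close> on \<open>A(d)\<close>. On \<open>A(d)\<^sub>j\<close> the commutator
  \<open>[E, F]\<close> is the scalar \<open>3(d - 1) - 2j\<close>, so \<open>E\<close>, \<open>F\<close> behave like an \<open>sl\<^sub>2\<close>-pair and the
  usual eigenvalue argument shows that \<open>EF\<close> is injective on \<open>A(d)\<^sub>j\<close> whenever \<open>2j < 3(d - 1)\<close>.
  Both operators commute with \<open>S\<^sub>3\<close>, so in that range \<open>E\<close> maps the \<open>\<chi>\<close>-isotypic part of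
  \<open>A(d)\<^sub>j\<^sub>+\<^sub>1\<close> onto that of \<open>A(d)\<^sub>j\<close>, and the multiplicity of \<open>\<chi>\<close> in \<open>Ker E\<close> is a difference
  of dimensions of isotypic parts. The sign part of \<open>A(d)\<^sub>j\<close> has a basis indexed by the
  strictly decreasing exponent triples, the trivial part one indexed by the weakly decreasing
  ones, and subtracting \<open>(2, 1, 0)\<close> maps the former for \<open>(d, j)\<close> bijectively onto the latter
  for \<open>(d - 2, j - 3)\<close>.\<close>

global_interpretation vs: vector_space "fscale :: 'k::field \<Rightarrow> ((nat \<Rightarrow> nat) \<Rightarrow> 'k) \<Rightarrow> _"
  by unfold_locales (auto simp: fscale_def algebra_simps fun_eq_iff)

section \<open>Rank--nullity inside a possibly infinite-dimensional vector space\<close>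

context vector_space
begin

lemma span_inter_eq_0_if_independent:
  assumes ind: "independent (A \<union> B)" and disj: "A \<inter> B = {}"
    and fA: "finite A" and fB: "finite B"
    and xA: "x \<in> span A" and xB: "x \<in> span B"
  shows "x = 0"
proof -
  obtain u where u: "x = (\<Sum>a\<in>A. u a *s a)" using xA fA span_finite by auto
  obtain w where w: "x = (\<Sum>b\<in>B. w b *s b)" using xB fB span_finite by auto
  define v where "v c = (if c \<in> A then u c else - w c)" for c
  have "(\<Sum>c\<in>A \<union> B. v c *s c) = (\<Sum>c\<in>A. v c *s c) + (\<Sum>c\<in>B. v c *s c)"
    using fA fB disj by (simp add: sum.union_disjoint)
  also have "(\<Sum>c\<in>A. v c *s c) = x" using u by (simp add: v_def)
  also have "(\<Sum>c\<in>B. v c *s c) = (\<Sum>c\<in>B. - (w c *s c))"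
    using disj by (intro sum.cong) (auto simp: v_def scale_minus_left)
  also have "\<dots> = - x" using w by (simp add: sum_negf)
  finally have "(\<Sum>c\<in>A \<union> B. v c *s c) = 0" by simp
  then have "\<forall>c\<in>A. v c = 0" using independentD[OF ind, of "A \<union> B" v] fA fB by auto
  then show ?thesis using u by (simp add: v_def)
qed

lemma dim_zero: "dim {0} = 0"
  using dim_span[of "{}"] dim_eq_card_independent[OF independent_empty] by simp

lemma dim_mono_finite_span:
  assumes "V \<subseteq> span W" "finite B" "W \<subseteq> span B"
  shows "dim V \<le> dim W"
proof -
  obtain C where C: "C \<subseteq> W" "independent C" "W \<subseteq> span C" "card C = dim W"
    using basis_exists by blast
  have "finite C" using independent_span_bound[OF assms(2) C(2)] C(1) assms(3) by auto
  have "V \<subseteq> span C" using assms(1) C(3) by (metis span_mono span_span subset_trans)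
  then show ?thesis using dim_le_card[OF _ \<open>finite C\<close>] C(4) by simp
qed

lemma rank_nullity_subspace:
  assumes V: "subspace V" and fB: "finite B" and VB: "V \<subseteq> span B"
    and lf: "Vector_Spaces.linear scale scale f"
  shows "dim V = dim {x\<in>V. f x = 0} + dim (f ` V)"
proof -
  interpret lf: Vector_Spaces.linear scale scale f by fact
  define K where "K = {x\<in>V. f x = 0}"
  have "K = V \<inter> {x. f x = 0}" by (auto simp: K_def)
  then have sK: "subspace K" using V lf.subspace_kernel subspace_inter by simp
  obtain BK where BK: "BK \<subseteq> K" "independent BK" "K \<subseteq> span BK"
    using maximal_independent_subset by blast
  have "BK \<subseteq> V" using BK(1) by (auto simp: K_def)
  obtain BV where BV: "BK \<subseteq> BV" "BV \<subseteq> V" "independent BV" "V \<subseteq> span BV"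
    using maximal_independent_subset_extend[OF \<open>BK \<subseteq> V\<close> BK(2)] by blast
  have fBV: "finite BV" using independent_span_bound[OF fB BV(3)] BV(2) VB by auto
  have fBK: "finite BK" using fBV BV(1) finite_subset by blast
  define C where "C = BV - BK"
  have fC: "finite C" using fBV by (simp add: C_def)
  have dV: "dim V = card BV" using basis_card_eq_dim[OF BV(2) BV(4) BV(3)] by simp
  have dK: "dim K = card BK" using basis_card_eq_dim[OF BK(1) BK(3) BK(2)] by simp
  have spanCV: "span C \<subseteq> V" using BV(2) V by (metis C_def Diff_subset span_minimal subset_trans)
  have injC: "inj_on f (span C)"
  proof -
    have "x = 0" if x: "x \<in> span C" "f x = 0" for x
    proof -
      have "x \<in> span BK" using x spanCV BK(3) by (auto simp: K_def)
      moreover have "BK \<union> C = BV" "BK \<inter> C = {}" using BV(1) by (auto simp: C_def)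
      ultimately show ?thesis
        using span_inter_eq_0_if_independent[of BK C x] BV(3) fBK fC x(1) by auto
    qed
    then show ?thesis using lf.inj_on_iff_eq_0[OF subspace_span] by blast
  qed
  have "independent (f ` C)"
    using lf.independent_injective_image[OF _ injC] BV(3) independent_mono C_def by blast
  moreover have "f ` V \<subseteq> span (f ` C)"
  proof
    fix y assume "y \<in> f ` V"
    then obtain x where x: "x \<in> V" "y = f x" by auto
    then have "y \<in> span (f ` BV)" using BV(4) lf.span_image by auto
    moreover have "f ` BV \<subseteq> insert 0 (f ` C)"
      using BV(1) BK(1) by (auto simp: C_def K_def)
    ultimately show "y \<in> span (f ` C)"
      by (metis span_insert_0 span_mono subsetD)
  qed
  moreover have "f ` C \<subseteq> f ` V" using BV(2) by (auto simp: C_def)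
  ultimately have "dim (f ` V) = card (f ` C)"
    using basis_card_eq_dim[of "f ` C" "f ` V"] by auto
  also have "\<dots> = card C"
    using card_image inj_on_subset[OF injC span_superset] by blast
  finally show ?thesis
    using dV dK BV(1) fBV fBK by (simp add: K_def C_def card_Diff_subset card_mono)
qed

end

section \<open>The operators \<open>E\<close> and \<open>F\<close> and their commutator\<close>

lemma sum_apply: "(\<Sum>x\<in>A. g x) b = (\<Sum>x\<in>A. g x b)"
  by (induction A rule: infinite_finite_induct) auto

lemma less_3_cases: "(k::nat) < 3 \<Longrightarrow> k = 0 \<or> k = 1 \<or> k = 2"
  by auto

lemma lessThan_3: "{..<3::nat} = {0,1,2}"
  by auto

lemma finite_mons: "finite (mons d j)"
proof -
  let ?g = "\<lambda>(x,y,z) i. if i = 0 then x else if i = 1 then y else if i = 2 then z else 0"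
  have "mons d j \<subseteq> ?g ` ({..<d} \<times> {..<d} \<times> {..<d})"
  proof
    fix a assume a: "a \<in> mons d j"
    then have "a = ?g (a 0, a 1, a 2)" by (auto simp: mons_def fun_eq_iff)
    moreover have "(a 0, a 1, a 2) \<in> {..<d} \<times> {..<d} \<times> {..<d}" using a by (auto simp: mons_def)
    ultimately show "a \<in> ?g ` ({..<d} \<times> {..<d} \<times> {..<d})" by blast
  qed
  then show ?thesis by (rule finite_subset) auto
qed

lemma mons_of_increment:
  assumes "k < 3" "a(k := Suc (a k)) \<in> mons d j"
  shows "1 \<le> j \<and> a \<in> mons d (j - 1)"
  using less_3_cases[OF assms(1)] assms(2) by (auto simp: mons_def split: if_splits)

lemma mons_of_decrement:
  assumes "k < 3" "1 \<le> b k" "b k < d" "b(k := b k - 1) \<in> mons d j"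
  shows "b \<in> mons d (Suc j)"
  using less_3_cases[OF assms(1)] assms(2-4) by (auto simp: mons_def split: if_splits)

lemma Acomp_nonzero_mons: "f \<in> Acomp d j \<Longrightarrow> f b \<noteq> 0 \<Longrightarrow> b \<in> mons d j"
  by (auto simp: Acomp_def)

lemma Acomp_subset_span_deltas:
  "Acomp d j \<subseteq> vs.span ((\<lambda>a b. if b = a then 1 else 0 :: 'k::field) ` mons d j)"
proof
  fix f :: "(nat \<Rightarrow> nat) \<Rightarrow> 'k" assume f: "f \<in> Acomp d j"
  have "f = (\<Sum>a\<in>mons d j. fscale (f a) (\<lambda>b. if b = a then 1 else 0))"
  proof
    fix b
    have "(\<Sum>a\<in>mons d j. fscale (f a) (\<lambda>b. if b = a then 1 else 0)) b
        = (\<Sum>a\<in>mons d j. if b = a then f a else 0)"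
      by (simp add: sum_apply fscale_def if_distrib cong: if_cong)
    then show "f b = (\<Sum>a\<in>mons d j. fscale (f a) (\<lambda>b. if b = a then 1 else 0)) b"
      using f finite_mons[of d j] by (auto simp: Acomp_def)
  qed
  also have "\<dots> \<in> vs.span ((\<lambda>a b. if b = a then 1 else 0) ` mons d j)"
    by (intro vs.span_sum vs.span_scale vs.span_base) auto
  finally show "f \<in> vs.span ((\<lambda>a b. if b = a then 1 else 0) ` mons d j)" .
qed

definition Eop :: "nat \<Rightarrow> ((nat \<Rightarrow> nat) \<Rightarrow> 'k::field) \<Rightarrow> ((nat \<Rightarrow> nat) \<Rightarrow> 'k)" where
  "Eop d f = (\<lambda>b. \<Sum>k<3. f (b(k := Suc (b k))) * of_nat (Suc (b k) * (d - Suc (b k))))"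

text \<open>Multiplication by \<open>x\<^sub>1 + x\<^sub>2 + x\<^sub>3\<close> in \<open>A(d)\<close>, written on coefficients.\<close>
definition Fop :: "nat \<Rightarrow> ((nat \<Rightarrow> nat) \<Rightarrow> 'k::field) \<Rightarrow> ((nat \<Rightarrow> nat) \<Rightarrow> 'k)" where
  "Fop d f = (\<lambda>b. \<Sum>k<3. if 1 \<le> b k \<and> b k < d then f (b(k := b k - 1)) else 0)"

lemma Emap_eq_Eop:
  fixes f :: "(nat \<Rightarrow> nat) \<Rightarrow> 'k::field"
  assumes f: "f \<in> Acomp d j"
  shows "Emap d j f = Eop d f"
proof
  fix b :: "nat \<Rightarrow> nat"
  define c where "c k = (of_nat (Suc (b k) * (d - Suc (b k))) :: 'k)" for k
  have shift: "(1 \<le> a k \<and> b = a(k := a k - 1)) \<longleftrightarrow> a = b(k := Suc (b k))" for a k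
    by (auto simp: fun_eq_iff split: if_splits)
  have coef: "Ecoef d a b = (\<Sum>k<3. if a = b(k := Suc (b k)) then c k else 0)" for a
    unfolding Ecoef_def c_def using shift by (intro sum.cong refl) auto
  have "Emap d j f b = (\<Sum>a\<in>mons d j. \<Sum>k<3. if a = b(k := Suc (b k)) then f a * c k else 0)"
    unfolding Emap_def coef sum_distrib_left by (intro sum.cong refl) simp
  also have "\<dots> = (\<Sum>k<3. \<Sum>a\<in>mons d j. if a = b(k := Suc (b k)) then f a * c k else 0)"
    by (rule sum.swap)
  also have "\<dots> = (\<Sum>k<3. f (b(k := Suc (b k))) * c k)"
  proof (intro sum.cong refl)
    fix k
    show "(\<Sum>a\<in>mons d j. if a = b(k := Suc (b k)) then f a * c k else 0)
        = f (b(k := Suc (b k))) * c k"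
      using finite_mons[of d j] Acomp_nonzero_mons[OF f, of "b(k := Suc (b k))"]
      by (auto simp: sum.delta')
  qed
  also have "\<dots> = Eop d f b" by (simp add: Eop_def c_def)
  finally show "Emap d j f b = Eop d f b" .
qed

lemma Eop_Acomp:
  assumes f: "f \<in> Acomp d j" and j: "1 \<le> j"
  shows "Eop d f \<in> Acomp d (j - 1)"
  unfolding Acomp_def
proof (intro CollectI allI impI)
  fix a assume "a \<notin> mons d (j - 1)"
  then have "f (a(k := Suc (a k))) = 0" if "k < 3" for k
    using mons_of_increment[OF that] Acomp_nonzero_mons[OF f] by blast
  then show "Eop d f a = 0" by (simp add: Eop_def)
qed

lemma Eop_Acomp_0:
  assumes f: "f \<in> Acomp d 0"
  shows "Eop d f = 0"
proof
  fix a
  have "f (a(k := Suc (a k))) = 0" if "k < 3" for k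
    using mons_of_increment[OF that] Acomp_nonzero_mons[OF f] by force
  then show "Eop d f a = 0 a" by (simp add: Eop_def)
qed

lemma Fop_Acomp:
  assumes f: "f \<in> Acomp d j"
  shows "Fop d f \<in> Acomp d (Suc j)"
  unfolding Acomp_def
proof (intro CollectI allI impI)
  fix b assume "b \<notin> mons d (Suc j)"
  then have "(if 1 \<le> b k \<and> b k < d then f (b(k := b k - 1)) else 0) = 0" if "k < 3" for k
    using mons_of_decrement[OF that] Acomp_nonzero_mons[OF f] by auto
  then show "Fop d f b = 0" by (simp add: Fop_def)
qed

lemma Eop_Fop_commutator_at:
  fixes f :: "(nat \<Rightarrow> nat) \<Rightarrow> 'k::field"
  assumes bound: "\<And>i. i < 3 \<Longrightarrow> f b \<noteq> 0 \<Longrightarrow> b i < d"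
  shows "Eop d (Fop d f) b
    = Fop d (Eop d f) b + of_int (3 * (int d - 1) - 2 * int (b 0 + b 1 + b 2)) * f b"
proof -
  define c where "c m = (of_nat (m * (d - m)) :: 'k)" for m
  define EF where "EF k l = (if 1 \<le> (b(k := Suc (b k))) l \<and> (b(k := Suc (b k))) l < d
     then f ((b(k := Suc (b k)))(l := (b(k := Suc (b k))) l - 1)) else 0) * c (Suc (b k))" for k l
  define FE where "FE k l = (if 1 \<le> b l \<and> b l < d
     then f ((b(l := b l - 1))(k := Suc ((b(l := b l - 1)) k))) * c (Suc ((b(l := b l - 1)) k))
     else 0)" for k l
  have EF_sum: "Eop d (Fop d f) b = (\<Sum>k<3. \<Sum>l<3. EF k l)"
    by (simp add: Eop_def Fop_def EF_def c_def sum_distrib_right)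
  have "Fop d (Eop d f) b = (\<Sum>l<3. \<Sum>k<3. FE k l)"
    unfolding Fop_def Eop_def FE_def c_def by (intro sum.cong refl) auto
  then have FE_sum: "Fop d (Eop d f) b = (\<Sum>k<3. \<Sum>l<3. FE k l)"
    using sum.swap by metis
  have diff: "EF k l - FE k l = (if k = l then of_int (int d - 1 - 2 * int (b k)) * f b else 0)"
    if "k < 3" for k l
  proof (cases "k = l \<and> f b \<noteq> 0")
    case False
    then show ?thesis by (auto simp: EF_def FE_def c_def fun_upd_twist)
  next
    case True
    then have "b k < d" "k = l" using bound that by auto
    \<comment> \<open>\<open>c (m + 1) - c m = d - 1 - 2m\<close> needs \<open>m < d\<close> because of truncated subtraction\<close>
    then obtain m where m: "d = Suc (b k) + m" using less_imp_Suc_add by blast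
    have "int (Suc (b k) * (d - Suc (b k))) - int (b k * (d - b k)) = int d - 1 - 2 * int (b k)"
      unfolding m by (simp add: algebra_simps)
    then have c_step: "c (Suc (b k)) - c (b k) = of_int (int d - 1 - 2 * int (b k))"
      unfolding c_def by (metis of_int_diff of_int_of_nat_eq)
    have "EF k k = c (Suc (b k)) * f b" by (auto simp: EF_def c_def)
    moreover have "FE k k = c (b k) * f b"
      using \<open>b k < d\<close> by (cases "b k = 0") (auto simp: FE_def c_def)
    ultimately have "EF k k - FE k k = (c (Suc (b k)) - c (b k)) * f b"
      by (simp add: algebra_simps)
    then show ?thesis using c_step \<open>k = l\<close> by simp
  qed
  have "Eop d (Fop d f) b - Fop d (Eop d f) b = (\<Sum>k<3. \<Sum>l<3. EF k l - FE k l)"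
    unfolding EF_sum FE_sum by (simp add: sum_subtractf)
  also have "\<dots> = (\<Sum>k<3. \<Sum>l<3. if k = l then of_int (int d - 1 - 2 * int (b k)) * f b else 0)"
    using diff by (intro sum.cong refl) auto
  also have "\<dots> = of_int (3 * (int d - 1) - 2 * int (b 0 + b 1 + b 2)) * f b"
    by (simp add: lessThan_3 algebra_simps)
  finally show ?thesis by (simp add: algebra_simps)
qed

lemma Eop_Fop_commutator:
  fixes f :: "(nat \<Rightarrow> nat) \<Rightarrow> 'k::field"
  assumes f: "f \<in> Acomp d j"
  shows "Eop d (Fop d f) = Fop d (Eop d f) + fscale (of_int (3 * (int d - 1) - 2 * int j)) f"
proof
  fix b
  show "Eop d (Fop d f) b = (Fop d (Eop d f) + fscale (of_int (3 * (int d - 1) - 2 * int j)) f) b"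
  proof (cases "f b = 0")
    case True
    then show ?thesis using Eop_Fop_commutator_at[of f b d] by (simp add: fscale_def)
  next
    case False
    then have "b \<in> mons d j" using Acomp_nonzero_mons[OF f] by auto
    then show ?thesis using Eop_Fop_commutator_at[of f b d] by (auto simp: fscale_def mons_def)
  qed
qed

lemma Eop_add: "Eop d (f + g) = Eop d f + Eop d g"
  by (simp add: Eop_def fun_eq_iff sum.distrib algebra_simps)

lemma Eop_fscale: "Eop d (fscale c f) = fscale c (Eop d f)"
  by (simp add: Eop_def fun_eq_iff fscale_def sum_distrib_left algebra_simps)

lemma Fop_add: "Fop d (f + g) = Fop d f + Fop d g"
  by (auto simp: Fop_def fun_eq_iff sum.distrib[symmetric] intro!: sum.cong)

lemma Fop_fscale: "Fop d (fscale c f) = fscale c (Fop d f)"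
  by (auto simp: Fop_def fun_eq_iff fscale_def sum_distrib_left intro!: sum.cong)

lemma Fop_zero: "Fop d 0 = 0"
  by (simp add: Fop_def fun_eq_iff zero_fun_def)

lemma linear_Eop: "Vector_Spaces.linear fscale fscale (Eop d :: ((nat \<Rightarrow> nat) \<Rightarrow> 'k::field) \<Rightarrow> _)"
  unfolding Vector_Spaces.linear_iff by (simp add: vs.vector_space_axioms Eop_add Eop_fscale)

lemma linear_Eop_Fop:
  "Vector_Spaces.linear fscale fscale (\<lambda>f. Eop d (Fop d f) :: (nat \<Rightarrow> nat) \<Rightarrow> 'k::field)"
  unfolding Vector_Spaces.linear_iff
  by (simp add: vs.vector_space_axioms Eop_add Eop_fscale Fop_add Fop_fscale)

lemma fscale_cancel_right: "fscale a v = fscale c v \<Longrightarrow> v \<noteq> 0 \<Longrightarrow> a = c"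
  by (auto simp: fscale_def fun_eq_iff)

text \<open>The eigenvalues of \<open>EF\<close> on \<open>A(d)\<^sub>j\<close> are partial sums of the commutator scalars
  \<open>3(d - 1) - 2(j - m)\<close>, by induction on \<open>j\<close> through \<open>FE v = EF v - [E, F] v\<close>.\<close>
lemma Eop_Fop_eigenvalue:
  fixes v :: "(nat \<Rightarrow> nat) \<Rightarrow> 'k::field"
  assumes "v \<in> Acomp d j" "v \<noteq> 0" "Eop d (Fop d v) = fscale c v"
  shows "\<exists>i\<le>j. c = of_int (\<Sum>m\<le>i. 3 * (int d - 1) - 2 * int (j - m))"
  using assms
proof (induction j arbitrary: v c)
  case 0
  have "fscale c v = fscale (of_int (3 * (int d - 1))) v"
    using Eop_Fop_commutator[OF 0(1)] Eop_Acomp_0[OF 0(1)] 0(3) by (simp add: Fop_zero)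
  then have "c = of_int (3 * (int d - 1))" using 0(2) by (rule fscale_cancel_right)
  then show ?case by simp
next
  case (Suc n)
  define h :: 'k where "h = of_int (3 * (int d - 1) - 2 * int (Suc n))"
  have FE: "Fop d (Eop d v) = fscale (c - h) v"
    using Eop_Fop_commutator[OF Suc(2)] Suc(4) by (simp add: h_def fscale_def fun_eq_iff algebra_simps)
  show ?case
  proof (cases "Eop d v = 0")
    case True
    then have "fscale (c - h) v = 0" using FE Fop_zero by metis
    then have "fscale (c - h) v = fscale 0 v" by (simp add: fscale_def fun_eq_iff)
    then have "c - h = 0" using Suc(3) by (rule fscale_cancel_right)
    then have "c = h" by simp
    then show ?thesis by (intro exI[of _ 0]) (simp add: h_def)
  next
    case False
    have "Eop d v \<in> Acomp d n" using Eop_Acomp[OF Suc(2)] by simp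
    moreover have "Eop d (Fop d (Eop d v)) = fscale (c - h) (Eop d v)"
      using FE Eop_fscale by metis
    ultimately obtain i where i: "i \<le> n" "c - h = of_int (\<Sum>m\<le>i. 3 * (int d - 1) - 2 * int (n - m))"
      using Suc.IH False by blast
    have "(\<Sum>m\<le>Suc i. 3 * (int d - 1) - 2 * int (Suc n - m))
        = (3 * (int d - 1) - 2 * int (Suc n)) + (\<Sum>m\<le>i. 3 * (int d - 1) - 2 * int (n - m))"
      by (subst sum.atMost_Suc_shift) simp
    moreover have "c = h + of_int (\<Sum>m\<le>i. 3 * (int d - 1) - 2 * int (n - m))"
      using i(2) by (simp add: diff_eq_eq)
    ultimately have "c = of_int (\<Sum>m\<le>Suc i. 3 * (int d - 1) - 2 * int (Suc n - m))"
      unfolding h_def by (simp only: of_int_add[symmetric])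
    then show ?thesis using i(1) by (intro exI[of _ "Suc i"]) simp
  qed
qed

lemma Eop_Fop_eq_0_imp_eq_0:
  fixes v :: "(nat \<Rightarrow> nat) \<Rightarrow> 'k::field_char_0"
  assumes "v \<in> Acomp d j" "2 * j < 3 * (d - 1)" "Eop d (Fop d v) = 0"
  shows "v = 0"
proof (rule ccontr)
  assume "v \<noteq> 0"
  moreover have "Eop d (Fop d v) = fscale 0 v" using assms(3) by (simp add: fscale_def fun_eq_iff)
  ultimately obtain i where i: "i \<le> j" "(0::'k) = of_int (\<Sum>m\<le>i. 3 * (int d - 1) - 2 * int (j - m))"
    using Eop_Fop_eigenvalue[OF assms(1)] by blast
  have "2 * int j < 3 * (int d - 1)" using assms(2) by (cases d) auto
  then have "3 * (int d - 1) - 2 * int (j - m) > 0" if "m \<le> i" for m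
    using that i(1) by (simp add: of_nat_diff)
  then have "(\<Sum>m\<le>i. 3 * (int d - 1) - 2 * int (j - m)) > 0"
    by (intro sum_pos) auto
  then show False using i(2) by (metis of_int_0_eq_iff less_irrefl)
qed

section \<open>Isotypic components of the \<open>S\<^sub>3\<close>-action\<close>

lemma comp_fun_upd_inj: "inj s \<Longrightarrow> (b \<circ> s)(k := v) = (b(s k := v)) \<circ> s"
  by (auto simp: fun_eq_iff inj_eq)

lemma permutes_lessThan_3: "s permutes {0,1,2::nat} \<Longrightarrow> s permutes {..<3}"
  by (simp add: lessThan_3)

lemma act_Eop:
  assumes s: "s permutes {0,1,2::nat}"
  shows "act s (Eop d f) = Eop d (act s f)"
proof
  fix b
  define g where "g m = f ((b(m := Suc (b m))) \<circ> s) * of_nat (Suc (b m) * (d - Suc (b m)))" for m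
  have "act s (Eop d f) b = (\<Sum>k<3. g (s k))"
    unfolding act_def Eop_def g_def comp_fun_upd_inj[OF permutes_inj[OF s]] by simp
  also have "\<dots> = (\<Sum>k<3. g k)"
    using sum.permute[OF permutes_lessThan_3[OF s], of g] by (simp add: comp_def)
  also have "\<dots> = Eop d (act s f) b" by (simp add: g_def Eop_def act_def)
  finally show "act s (Eop d f) b = Eop d (act s f) b" .
qed

lemma act_Fop:
  assumes s: "s permutes {0,1,2::nat}"
  shows "act s (Fop d f) = Fop d (act s f)"
proof
  fix b
  define g where "g m = (if 1 \<le> b m \<and> b m < d then f ((b(m := b m - 1)) \<circ> s) else 0)" for m
  have "act s (Fop d f) b
      = (\<Sum>k<3. if 1 \<le> b (s k) \<and> b (s k) < d then f ((b \<circ> s)(k := b (s k) - 1)) else 0)"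
    by (simp only: act_def Fop_def o_apply)
  also have "\<dots> = (\<Sum>k<3. g (s k))"
    unfolding g_def comp_fun_upd_inj[OF permutes_inj[OF s]] ..
  also have "\<dots> = (\<Sum>k<3. g k)"
    using sum.permute[OF permutes_lessThan_3[OF s], of g] by (simp add: comp_def)
  also have "\<dots> = Fop d (act s f) b" by (simp add: g_def Fop_def act_def)
  finally show "act s (Fop d f) b = Fop d (act s f) b" .
qed

lemma act_add: "act s (f + g) = act s f + act s g"
  by (simp add: act_def fun_eq_iff)

lemma act_fscale: "act s (fscale c f) = fscale c (act s f)"
  by (simp add: act_def fscale_def fun_eq_iff)

definition isotypic :: "nat \<Rightarrow> nat \<Rightarrow> ((nat \<Rightarrow> nat) \<Rightarrow> 'k::field) \<Rightarrow> ((nat \<Rightarrow> nat) \<Rightarrow> 'k) set" where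
  "isotypic d j \<chi> = {f \<in> Acomp d j. \<forall>s. s permutes {0,1,2::nat} \<longrightarrow> act s f = fscale (\<chi> s) f}"

lemma isotypic_comp_permutes:
  assumes "g \<in> isotypic d j \<chi>" "s permutes {0,1,2::nat}"
  shows "g (r \<circ> s) = \<chi> s * g r"
proof -
  have "act s g r = fscale (\<chi> s) g r" using assms by (auto simp: isotypic_def)
  then show ?thesis by (simp add: act_def fscale_def)
qed

lemma subspace_isotypic: "vs.subspace (isotypic d j \<chi>)"
  unfolding vs.subspace_def
proof (intro conjI ballI allI)
  show "0 \<in> isotypic d j \<chi>"
    by (simp add: isotypic_def Acomp_def act_def fscale_def zero_fun_def)
  show "x + y \<in> isotypic d j \<chi>" if "x \<in> isotypic d j \<chi>" "y \<in> isotypic d j \<chi>" for x y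
    using that by (simp add: isotypic_def Acomp_def act_add)
      (simp add: fscale_def fun_eq_iff algebra_simps)
  show "fscale c x \<in> isotypic d j \<chi>" if "x \<in> isotypic d j \<chi>" for c x
    using that by (simp add: isotypic_def Acomp_def act_fscale)
      (simp add: fscale_def fun_eq_iff algebra_simps)
qed

lemma Eop_isotypic:
  assumes f: "f \<in> isotypic d j \<chi>" and j: "1 \<le> j"
  shows "Eop d f \<in> isotypic d (j - 1) \<chi>"
proof -
  have "act s (Eop d f) = fscale (\<chi> s) (Eop d f)" if "s permutes {0,1,2::nat}" for s
    using f that by (simp add: isotypic_def act_Eop Eop_fscale)
  moreover have "f \<in> Acomp d j" using f by (simp add: isotypic_def)
  ultimately show ?thesis using Eop_Acomp[OF _ j] by (simp add: isotypic_def)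
qed

lemma Fop_isotypic:
  assumes f: "f \<in> isotypic d j \<chi>"
  shows "Fop d f \<in> isotypic d (Suc j) \<chi>"
proof -
  have "act s (Fop d f) = fscale (\<chi> s) (Fop d f)" if "s permutes {0,1,2::nat}" for s
    using f that by (simp add: isotypic_def act_Fop Fop_fscale)
  moreover have "f \<in> Acomp d j" using f by (simp add: isotypic_def)
  ultimately show ?thesis using Fop_Acomp by (simp add: isotypic_def)
qed

lemma isotypic_subset_finite_span: "\<exists>B. finite B \<and> isotypic d j \<chi> \<subseteq> vs.span B"
proof (intro exI conjI)
  show "isotypic d j \<chi> \<subseteq> vs.span ((\<lambda>a b. if b = a then 1 else 0) ` mons d j)"
    using Acomp_subset_span_deltas unfolding isotypic_def by blast
qed (simp add: finite_mons)

text \<open>\<open>E\<close> is onto because \<open>EF\<close> is injective on the \<open>\<chi>\<close>-part of degree \<open>j - 1\<close>.\<close>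
lemma dim_Eop_image_isotypic:
  fixes \<chi> :: "(nat \<Rightarrow> nat) \<Rightarrow> 'k::field_char_0"
  assumes j: "1 \<le> j" "2 * (j - 1) < 3 * (d - 1)"
  shows "vs.dim (Eop d ` isotypic d j \<chi>) = vs.dim (isotypic d (j - 1) \<chi>)"
proof -
  let ?V = "isotypic d j \<chi>" and ?W = "isotypic d (j - 1) \<chi>"
  obtain B where B: "finite B" "?W \<subseteq> vs.span B" using isotypic_subset_finite_span by blast
  have img: "Eop d ` ?V \<subseteq> ?W" using Eop_isotypic j(1) by blast
  have EF_img: "(\<lambda>f. Eop d (Fop d f)) ` ?W \<subseteq> Eop d ` ?V"
    using Fop_isotypic[of _ d "j - 1" \<chi>] j(1) by auto
  have "{f \<in> ?W. Eop d (Fop d f) = 0} = {0}"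
  proof -
    have "f = 0" if "f \<in> ?W" "Eop d (Fop d f) = 0" for f
      using Eop_Fop_eq_0_imp_eq_0[of f d "j - 1"] that j(2) by (simp add: isotypic_def)
    moreover have "(0 :: (nat \<Rightarrow> nat) \<Rightarrow> 'k) \<in> ?W" by (rule vs.subspace_0[OF subspace_isotypic])
    moreover have "Eop d (Fop d 0) = (0 :: (nat \<Rightarrow> nat) \<Rightarrow> 'k)"
      unfolding Fop_zero by (simp add: Eop_def zero_fun_def)
    ultimately show ?thesis by auto
  qed
  then have "vs.dim ?W = vs.dim ((\<lambda>f. Eop d (Fop d f)) ` ?W)"
    using vs.rank_nullity_subspace[OF subspace_isotypic B linear_Eop_Fop[of d]] vs.dim_zero by simp
  also have "\<dots> \<le> vs.dim (Eop d ` ?V)"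
    by (rule vs.dim_mono_finite_span[OF subset_trans[OF EF_img vs.span_superset] B(1)
          subset_trans[OF img B(2)]])
  finally have "vs.dim ?W \<le> vs.dim (Eop d ` ?V)" .
  moreover have "vs.dim (Eop d ` ?V) \<le> vs.dim ?W"
    by (rule vs.dim_mono_finite_span[OF subset_trans[OF img vs.span_superset] B])
  ultimately show ?thesis by simp
qed

lemma dim_ker_Eop_isotypic:
  fixes \<chi> :: "(nat \<Rightarrow> nat) \<Rightarrow> 'k::field_char_0"
  assumes "1 \<le> j" "2 * (j - 1) < 3 * (d - 1)"
  shows "vs.dim {f \<in> isotypic d j \<chi>. Eop d f = 0}
    = vs.dim (isotypic d j \<chi>) - vs.dim (isotypic d (j - 1) \<chi>)"
proof -
  obtain B where B: "finite B" "isotypic d j \<chi> \<subseteq> vs.span B"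
    using isotypic_subset_finite_span by blast
  show ?thesis
    using vs.rank_nullity_subspace[OF subspace_isotypic B linear_Eop[of d]]
      dim_Eop_image_isotypic[OF assms, of \<chi>]
    by simp
qed

lemma ker_Eop_isotypic_0: "{f \<in> isotypic d 0 \<chi>. Eop d f = 0} = isotypic d 0 \<chi>"
  using Eop_Acomp_0 by (auto simp: isotypic_def)

section \<open>Bases of the isotypic components\<close>

lemma delta_family_independent:
  fixes v :: "(nat \<Rightarrow> nat) \<Rightarrow> (nat \<Rightarrow> nat) \<Rightarrow> 'k::field"
  assumes delta: "\<And>r r'. r \<in> R \<Longrightarrow> r' \<in> R \<Longrightarrow> v r r' = (if r' = r then 1 else 0)"
  shows "inj_on v R" "vs.independent (v ` R)"
proof -
  show "inj_on v R"
  proof (rule inj_onI)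
    fix r r' assume "r \<in> R" "r' \<in> R" "v r = v r'"
    then show "r = r'" using delta[of r r] delta[of r' r] by (auto split: if_splits)
  qed
  show "vs.independent (v ` R)"
    unfolding vs.dependent_def
  proof clarsimp
    fix r assume r: "r \<in> R" and sp: "v r \<in> vs.span (v ` R - {v r})"
    let ?T = "{g :: (nat \<Rightarrow> nat) \<Rightarrow> 'k. g r = 0}"
    have "vs.subspace ?T" by (auto simp: vs.subspace_def fscale_def)
    moreover have "v ` R - {v r} \<subseteq> ?T" using delta r by force
    ultimately have "vs.span (v ` R - {v r}) \<subseteq> ?T" using vs.span_minimal by blast
    then show False using sp delta[OF r r] by auto
  qed
qed

lemma isotypic_expansion:
  fixes f :: "(nat \<Rightarrow> nat) \<Rightarrow> 'k::field"
  assumes f: "f \<in> isotypic d j \<chi>" and "finite R"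
    and v: "\<And>r. r \<in> R \<Longrightarrow> v r \<in> isotypic d j \<chi>"
    and delta: "\<And>r r'. r \<in> R \<Longrightarrow> r' \<in> R \<Longrightarrow> v r r' = (if r' = r then 1 else 0)"
    and orbits: "\<And>g b. g \<in> isotypic d j \<chi> \<Longrightarrow> g b \<noteq> 0 \<Longrightarrow>
      \<exists>r\<in>R. \<exists>s. s permutes {0,1,2::nat} \<and> b = r \<circ> s"
  shows "f = (\<Sum>r\<in>R. fscale (f r) (v r))"
proof
  fix b
  have rhs: "(\<Sum>r\<in>R. fscale (f r) (v r)) b = (\<Sum>r\<in>R. f r * v r b)"
    by (simp add: sum_apply fscale_def)
  show "f b = (\<Sum>r\<in>R. fscale (f r) (v r)) b"
  proof (cases "\<exists>r\<in>R. \<exists>s. s permutes {0,1,2::nat} \<and> b = r \<circ> s")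
    case True
    then obtain r0 s where r0: "r0 \<in> R" and s: "s permutes {0,1,2::nat}" and b: "b = r0 \<circ> s"
      by blast
    have "(\<Sum>r\<in>R. f r * v r b) = (\<Sum>r\<in>R. if r = r0 then \<chi> s * f r0 else 0)"
      unfolding b using isotypic_comp_permutes[OF v s] delta r0
      by (intro sum.cong refl) (auto simp: mult.commute)
    also have "\<dots> = f b"
      unfolding b using \<open>finite R\<close> r0 isotypic_comp_permutes[OF f s] by simp
    finally show ?thesis using rhs by simp
  next
    case False
    then have "f b = 0" "\<And>r. r \<in> R \<Longrightarrow> v r b = 0" using orbits f v by blast+
    then show ?thesis using rhs by simp
  qed
qed

lemma dim_isotypic_eq_card:
  fixes v :: "(nat \<Rightarrow> nat) \<Rightarrow> (nat \<Rightarrow> nat) \<Rightarrow> 'k::field"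
  assumes "finite R"
    and v: "\<And>r. r \<in> R \<Longrightarrow> v r \<in> isotypic d j \<chi>"
    and delta: "\<And>r r'. r \<in> R \<Longrightarrow> r' \<in> R \<Longrightarrow> v r r' = (if r' = r then 1 else 0)"
    and orbits: "\<And>g b. g \<in> isotypic d j \<chi> \<Longrightarrow> g b \<noteq> 0 \<Longrightarrow>
      \<exists>r\<in>R. \<exists>s. s permutes {0,1,2::nat} \<and> b = r \<circ> s"
  shows "vs.dim (isotypic d j \<chi>) = card R"
proof -
  note indep = delta_family_independent[OF delta]
  have "isotypic d j \<chi> \<subseteq> vs.span (v ` R)"
  proof
    fix f assume f: "f \<in> isotypic d j \<chi>"
    have "(\<Sum>r\<in>R. fscale (f r) (v r)) \<in> vs.span (v ` R)"
      by (intro vs.span_sum vs.span_scale vs.span_base) auto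
    then show "f \<in> vs.span (v ` R)" using isotypic_expansion[OF f assms] by simp
  qed
  moreover have "v ` R \<subseteq> isotypic d j \<chi>" using v by auto
  ultimately have "card (v ` R) = vs.dim (isotypic d j \<chi>)"
    using vs.basis_card_eq_dim indep(2) by blast
  then show ?thesis using card_image[OF indep(1)] by simp
qed

lemma permutes_012_values:
  assumes "s permutes {0,1,2::nat}"
  shows "s 0 \<in> {0,1,2} \<and> s 1 \<in> {0,1,2} \<and> s 2 \<in> {0,1,2} \<and> s 0 \<noteq> s 1 \<and> s 0 \<noteq> s 2 \<and> s 1 \<noteq> s 2"
proof -
  have "s i \<in> {0,1,2}" if "i \<in> {0,1,2}" for i by (simp only: permutes_in_image[OF assms] that)
  moreover have "s i \<noteq> s i'" if "i \<noteq> i'" for i i'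
    using that permutes_inj[OF assms] by (auto dest: injD)
  ultimately show ?thesis by simp
qed

lemma permutes_012_ext:
  assumes "s permutes {0,1,2::nat}" "g (s 0) = g 0" "g (s 1) = g 1" "g (s 2) = g 2"
  shows "g \<circ> s = g"
proof
  fix i
  show "(g \<circ> s) i = g i"
    using assms permutes_not_in[OF assms(1), of i] by (cases "i \<in> {0,1,2}") auto
qed

lemma comp_permutes_cancel:
  assumes "t permutes S"
  shows "b \<circ> t = c \<circ> t \<longleftrightarrow> b = c"
  by (metis assms comp_assoc comp_id permutes_inv_o(1))

lemma mons_comp_permutes:
  assumes s: "s permutes {0,1,2::nat}" and b: "b \<in> mons d j"
  shows "b \<circ> s \<in> mons d j"
proof -
  have "(\<Sum>i\<in>{0,1,2::nat}. b i) = (\<Sum>i\<in>{0,1,2::nat}. b (s i))"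
    using sum.permute[OF s, of b] by (simp add: comp_def)
  moreover have "b (s i) < d" if "i < 3" for i
    using b permutes_in_image[OF s, of i] that by (auto simp: mons_def)
  moreover have "b (s i) = 0" if "i \<ge> 3" for i
    using b permutes_not_in[OF s, of i] that by (auto simp: mons_def)
  ultimately show ?thesis using b by (simp add: mons_def)
qed

lemma exists_permutes_sorted:
  "\<exists>s. s permutes {0,1,2::nat} \<and> ((b::nat \<Rightarrow> nat) \<circ> s) 0 \<ge> (b \<circ> s) 1 \<and> (b \<circ> s) 1 \<ge> (b \<circ> s) 2"
proof -
  let ?t = "Transposition.transpose :: nat \<Rightarrow> nat \<Rightarrow> nat \<Rightarrow> nat"
  have p01: "?t 0 1 permutes {0,1,2}" by (rule permutes_swap_id) auto
  have p12: "?t 1 2 permutes {0,1,2}" by (rule permutes_swap_id) auto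
  have p02: "?t 0 2 permutes {0,1,2}" by (rule permutes_swap_id) auto
  have pa: "?t 0 1 \<circ> ?t 1 2 permutes {0,1,2}" by (rule permutes_compose[OF p12 p01])
  have pb: "?t 1 2 \<circ> ?t 0 1 permutes {0,1,2}" by (rule permutes_compose[OF p01 p12])
  consider "b 0 \<ge> b 1" "b 1 \<ge> b 2" | "b 0 \<ge> b 2" "b 2 \<ge> b 1" | "b 1 \<ge> b 0" "b 0 \<ge> b 2"
    | "b 1 \<ge> b 2" "b 2 \<ge> b 0" | "b 2 \<ge> b 0" "b 0 \<ge> b 1" | "b 2 \<ge> b 1" "b 1 \<ge> b 0"
    by linarith
  then show ?thesis
  proof cases
    case 1 then show ?thesis by (intro exI[of _ id]) (simp add: permutes_id)
  next
    case 2 then show ?thesis by (intro exI[of _ "?t 1 2"] conjI p12) (simp_all add: transpose_def)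
  next
    case 3 then show ?thesis by (intro exI[of _ "?t 0 1"] conjI p01) (simp_all add: transpose_def)
  next
    case 4 then show ?thesis by (intro exI[of _ "?t 0 1 \<circ> ?t 1 2"] conjI pa) (simp_all add: transpose_def)
  next
    case 5 then show ?thesis by (intro exI[of _ "?t 1 2 \<circ> ?t 0 1"] conjI pb) (simp_all add: transpose_def)
  next
    case 6 then show ?thesis by (intro exI[of _ "?t 0 2"] conjI p02) (simp_all add: transpose_def)
  qed
qed


lemma sorted_comp_permutes_eq:
  fixes r :: "nat \<Rightarrow> nat"
  assumes s: "s permutes {0,1,2::nat}"
    and "r 0 \<ge> r 1" "r 1 \<ge> r 2" "(r \<circ> s) 0 \<ge> (r \<circ> s) 1" "(r \<circ> s) 1 \<ge> (r \<circ> s) 2"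
  shows "r \<circ> s = r"
proof (rule permutes_012_ext[OF s])
  show "r (s 0) = r 0" "r (s 1) = r 1" "r (s 2) = r 2"
    using permutes_012_values[OF s] assms(2-) by (auto simp: comp_def; linarith)+
qed

lemma strictly_sorted_comp_permutes_id:
  fixes r :: "nat \<Rightarrow> nat"
  assumes s: "s permutes {0,1,2::nat}"
    and "r 0 > r 1" "r 1 > r 2" "(r \<circ> s) 0 > (r \<circ> s) 1" "(r \<circ> s) 1 > (r \<circ> s) 2"
  shows "s = id"
proof -
  have "id \<circ> s = id"
  proof (rule permutes_012_ext[OF s])
    show "id (s 0) = id 0" "id (s 1) = id 1" "id (s 2) = id 2"
      using permutes_012_values[OF s] assms(2-) by (auto simp: comp_def; linarith)+
  qed
  then show ?thesis by simp
qed

definition strict_mons :: "nat \<Rightarrow> nat \<Rightarrow> (nat \<Rightarrow> nat) set" where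
  "strict_mons d j = {r \<in> mons d j. r 1 < r 0 \<and> r 2 < r 1}"

definition sorted_mons :: "nat \<Rightarrow> nat \<Rightarrow> (nat \<Rightarrow> nat) set" where
  "sorted_mons d j = {r \<in> mons d j. r 1 \<le> r 0 \<and> r 2 \<le> r 1}"

definition alt_orbit_sum :: "(nat \<Rightarrow> nat) \<Rightarrow> (nat \<Rightarrow> nat) \<Rightarrow> 'k::field" where
  "alt_orbit_sum r = (\<lambda>b. \<Sum>s | s permutes {0,1,2::nat}. if b = r \<circ> s then of_int (sign s) else 0)"

definition orbit_indicator :: "(nat \<Rightarrow> nat) \<Rightarrow> (nat \<Rightarrow> nat) \<Rightarrow> 'k::field" where
  "orbit_indicator r = (\<lambda>b. if \<exists>s. s permutes {0,1,2::nat} \<and> b = r \<circ> s then 1 else 0)"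

lemma finite_strict_mons: "finite (strict_mons d j)"
  using finite_mons[of d j] by (rule finite_subset[rotated]) (auto simp: strict_mons_def)

lemma finite_sorted_mons: "finite (sorted_mons d j)"
  using finite_mons[of d j] by (rule finite_subset[rotated]) (auto simp: sorted_mons_def)

lemma Acomp_if_vanishes_off_orbit:
  assumes r: "r \<in> mons d j"
    and g: "\<And>b. (\<And>s. s permutes {0,1,2::nat} \<Longrightarrow> b \<noteq> r \<circ> s) \<Longrightarrow> g b = 0"
  shows "g \<in> Acomp d j"
  unfolding Acomp_def
proof (intro CollectI allI impI)
  fix b assume "b \<notin> mons d j"
  then have "b \<noteq> r \<circ> s" if "s permutes {0,1,2::nat}" for s
    using mons_comp_permutes[OF that r] by auto
  then show "g b = 0" by (rule g)
qed

lemma permutation_if_permutes_012: "s permutes {0,1,2::nat} \<Longrightarrow> permutation s"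
  unfolding permutation_permutes by (rule exI[of _ "{0,1,2}"]) simp

lemma alt_orbit_sum_isotypic:
  assumes r: "r \<in> mons d j"
  shows "(alt_orbit_sum r :: _ \<Rightarrow> 'k::field) \<in> isotypic d j (\<lambda>s. of_int (sign s))"
proof -
  have "act t (alt_orbit_sum r) b = fscale (of_int (sign t)) (alt_orbit_sum r :: _ \<Rightarrow> 'k) b"
    if t: "t permutes {0,1,2::nat}" for t b
  proof -
    have "act t (alt_orbit_sum r) b = (\<Sum>p | p permutes {0,1,2::nat}.
        if b \<circ> t = r \<circ> (p \<circ> t) then (of_int (sign (p \<circ> t)) :: 'k) else 0)"
      unfolding act_def alt_orbit_sum_def by (rule sum_permutations_compose_right[OF t])
    also have "\<dots> = (\<Sum>p | p permutes {0,1,2::nat}.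
        of_int (sign t) * (if b = r \<circ> p then of_int (sign p) else 0))"
    proof (intro sum.cong refl)
      fix p assume "p \<in> {p. p permutes {0,1,2::nat}}"
      then have "sign (p \<circ> t) = sign p * sign t"
        using sign_compose permutation_if_permutes_012 t by blast
      moreover have "b \<circ> t = r \<circ> (p \<circ> t) \<longleftrightarrow> b = r \<circ> p"
        using comp_permutes_cancel[OF t, of b "r \<circ> p"] by (simp add: comp_assoc)
      ultimately show "(if b \<circ> t = r \<circ> (p \<circ> t) then (of_int (sign (p \<circ> t)) :: 'k) else 0)
          = of_int (sign t) * (if b = r \<circ> p then of_int (sign p) else 0)"
        by simp
    qed
    finally show ?thesis by (simp add: fscale_def alt_orbit_sum_def sum_distrib_left)
  qed
  moreover have "alt_orbit_sum r \<in> Acomp d j"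
    using r by (rule Acomp_if_vanishes_off_orbit) (simp add: alt_orbit_sum_def)
  ultimately show ?thesis by (simp add: isotypic_def fun_eq_iff)
qed

lemma alt_orbit_sum_delta:
  assumes r: "r \<in> strict_mons d j" and r': "r' \<in> strict_mons d j"
  shows "(alt_orbit_sum r :: _ \<Rightarrow> 'k::field) r' = (if r' = r then 1 else 0)"
proof -
  have "r' = r \<circ> s \<longleftrightarrow> s = id \<and> r' = r" if s: "s permutes {0,1,2::nat}" for s
    using strictly_sorted_comp_permutes_id[OF s, of r] r r' by (auto simp: strict_mons_def)
  then have "(alt_orbit_sum r :: _ \<Rightarrow> 'k) r'
      = (\<Sum>s | s permutes {0,1,2::nat}. if s = id then (if r' = r then 1 else 0) else 0)"
    unfolding alt_orbit_sum_def by (intro sum.cong refl) (auto simp: sign_id)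
  then show ?thesis using finite_permutations[of "{0,1,2::nat}"] permutes_id by simp
qed

lemma isotypic_sign_vanishes_on_repeated_exponent:
  fixes g :: "(nat \<Rightarrow> nat) \<Rightarrow> 'k::field_char_0"
  assumes g: "g \<in> isotypic d j (\<lambda>s. of_int (sign s))"
    and pq: "p < 3" "q < 3" "p \<noteq> q" "b p = b q"
  shows "g b = 0"
proof -
  have t: "transpose p q permutes {0,1,2::nat}" using pq by (intro permutes_swap_id) auto
  have "b \<circ> transpose p q = b" using pq(4) by (auto simp: fun_eq_iff transpose_def)
  then have "g b = - g b"
    using isotypic_comp_permutes[OF g t, of b] pq(3) by (simp add: sign_swap_id)
  then show ?thesis by simp
qed

lemma dim_isotypic_sign:
  "vs.dim (isotypic d j (\<lambda>s. of_int (sign s)) :: ((nat \<Rightarrow> nat) \<Rightarrow> 'k::field_char_0) set)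
    = card (strict_mons d j)"
proof (rule dim_isotypic_eq_card[OF finite_strict_mons])
  show "alt_orbit_sum r \<in> isotypic d j (\<lambda>s. of_int (sign s))" if "r \<in> strict_mons d j" for r
    using that alt_orbit_sum_isotypic by (auto simp: strict_mons_def)
  show "alt_orbit_sum r r' = (if r' = r then 1 else 0)"
    if "r \<in> strict_mons d j" "r' \<in> strict_mons d j" for r r'
    using that by (rule alt_orbit_sum_delta)
  fix g :: "(nat \<Rightarrow> nat) \<Rightarrow> 'k" and b
  assume g: "g \<in> isotypic d j (\<lambda>s. of_int (sign s))" and gb: "g b \<noteq> 0"
  have "g \<in> Acomp d j" using g by (simp add: isotypic_def)
  then have b: "b \<in> mons d j" using gb by (rule Acomp_nonzero_mons)
  have distinct: "b 0 \<noteq> b 1" "b 0 \<noteq> b 2" "b 1 \<noteq> b 2"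
    using isotypic_sign_vanishes_on_repeated_exponent[OF g, of 0 1 b]
      isotypic_sign_vanishes_on_repeated_exponent[OF g, of 0 2 b]
      isotypic_sign_vanishes_on_repeated_exponent[OF g, of 1 2 b] gb by auto
  obtain \<sigma> where \<sigma>: "\<sigma> permutes {0,1,2::nat}" "(b \<circ> \<sigma>) 0 \<ge> (b \<circ> \<sigma>) 1" "(b \<circ> \<sigma>) 1 \<ge> (b \<circ> \<sigma>) 2"
    using exists_permutes_sorted by blast
  have "(b \<circ> \<sigma>) 0 \<noteq> (b \<circ> \<sigma>) 1" "(b \<circ> \<sigma>) 1 \<noteq> (b \<circ> \<sigma>) 2"
    using permutes_012_values[OF \<sigma>(1)] distinct by auto
  then have "b \<circ> \<sigma> \<in> strict_mons d j"
    using \<sigma> mons_comp_permutes[OF \<sigma>(1) b] by (auto simp: strict_mons_def)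
  moreover have "b = (b \<circ> \<sigma>) \<circ> inv \<sigma>" by (simp add: comp_assoc permutes_inv_o(1)[OF \<sigma>(1)])
  ultimately show "\<exists>r\<in>strict_mons d j. \<exists>s. s permutes {0,1,2::nat} \<and> b = r \<circ> s"
    using permutes_inv[OF \<sigma>(1)] by blast
qed

lemma orbit_indicator_isotypic:
  assumes r: "r \<in> mons d j"
  shows "(orbit_indicator r :: _ \<Rightarrow> 'k::field) \<in> isotypic d j (\<lambda>_. 1)"
proof -
  have "(\<exists>s. s permutes {0,1,2::nat} \<and> b \<circ> t = r \<circ> s) \<longleftrightarrow> (\<exists>s. s permutes {0,1,2::nat} \<and> b = r \<circ> s)"
    if t: "t permutes {0,1,2::nat}" for t b
  proof
    assume "\<exists>s. s permutes {0,1,2::nat} \<and> b \<circ> t = r \<circ> s"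
    then obtain s where s: "s permutes {0,1,2::nat}" "b \<circ> t = r \<circ> s" by blast
    then have "b \<circ> t = (r \<circ> (s \<circ> inv t)) \<circ> t"
      by (simp add: comp_assoc permutes_inv_o(2)[OF t])
    then show "\<exists>s. s permutes {0,1,2::nat} \<and> b = r \<circ> s"
      using comp_permutes_cancel[OF t] permutes_compose[OF permutes_inv[OF t] s(1)] by blast
  next
    assume "\<exists>s. s permutes {0,1,2::nat} \<and> b = r \<circ> s"
    then obtain s where "s permutes {0,1,2::nat}" "b = r \<circ> s" by blast
    then show "\<exists>s. s permutes {0,1,2::nat} \<and> b \<circ> t = r \<circ> s"
      using permutes_compose[OF t] by (metis comp_assoc)
  qed
  then have "act t (orbit_indicator r) = fscale 1 (orbit_indicator r :: _ \<Rightarrow> 'k)"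
    if "t permutes {0,1,2::nat}" for t
    using that by (simp add: act_def orbit_indicator_def fscale_def fun_eq_iff)
  moreover have "orbit_indicator r \<in> Acomp d j"
    using r by (rule Acomp_if_vanishes_off_orbit) (auto simp: orbit_indicator_def)
  ultimately show ?thesis by (simp add: isotypic_def)
qed

lemma orbit_indicator_delta:
  assumes r: "r \<in> sorted_mons d j" and r': "r' \<in> sorted_mons d j"
  shows "(orbit_indicator r :: _ \<Rightarrow> 'k::field) r' = (if r' = r then 1 else 0)"
proof -
  have "(\<exists>s. s permutes {0,1,2::nat} \<and> r' = r \<circ> s) \<longleftrightarrow> r' = r"
  proof
    assume "\<exists>s. s permutes {0,1,2::nat} \<and> r' = r \<circ> s"
    then obtain s where s: "s permutes {0,1,2::nat}" "r' = r \<circ> s" by blast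
    then show "r' = r"
      using sorted_comp_permutes_eq[OF s(1), of r] r r' by (auto simp: sorted_mons_def)
  next
    assume "r' = r"
    then show "\<exists>s. s permutes {0,1,2::nat} \<and> r' = r \<circ> s"
      using permutes_id[of "{0,1,2::nat}"] by (metis comp_id)
  qed
  then show ?thesis by (simp add: orbit_indicator_def)
qed

lemma dim_isotypic_triv:
  "vs.dim (isotypic d j (\<lambda>_. 1) :: ((nat \<Rightarrow> nat) \<Rightarrow> 'k::field) set) = card (sorted_mons d j)"
proof (rule dim_isotypic_eq_card[OF finite_sorted_mons])
  show "orbit_indicator r \<in> isotypic d j (\<lambda>_. 1)" if "r \<in> sorted_mons d j" for r
    using that orbit_indicator_isotypic by (auto simp: sorted_mons_def)
  show "orbit_indicator r r' = (if r' = r then 1 else 0)"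
    if "r \<in> sorted_mons d j" "r' \<in> sorted_mons d j" for r r'
    using that by (rule orbit_indicator_delta)
  fix g :: "(nat \<Rightarrow> nat) \<Rightarrow> 'k" and b
  assume g: "g \<in> isotypic d j (\<lambda>_. 1)" and gb: "g b \<noteq> 0"
  have "g \<in> Acomp d j" using g by (simp add: isotypic_def)
  then have b: "b \<in> mons d j" using gb by (rule Acomp_nonzero_mons)
  obtain \<sigma> where \<sigma>: "\<sigma> permutes {0,1,2::nat}" "(b \<circ> \<sigma>) 0 \<ge> (b \<circ> \<sigma>) 1" "(b \<circ> \<sigma>) 1 \<ge> (b \<circ> \<sigma>) 2"
    using exists_permutes_sorted by blast
  then have "b \<circ> \<sigma> \<in> sorted_mons d j"
    using mons_comp_permutes[OF \<sigma>(1) b] by (auto simp: sorted_mons_def)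
  moreover have "b = (b \<circ> \<sigma>) \<circ> inv \<sigma>" by (simp add: comp_assoc permutes_inv_o(1)[OF \<sigma>(1)])
  ultimately show "\<exists>r\<in>sorted_mons d j. \<exists>s. s permutes {0,1,2::nat} \<and> b = r \<circ> s"
    using permutes_inv[OF \<sigma>(1)] by blast
qed

lemma sgn_mult_eq_dim_ker_Eop:
  "sgn_mult (K :: 'k::field itself) d (int j)
    = vs.dim {f \<in> isotypic d j (\<lambda>s. of_int (sign s)) :: ((nat \<Rightarrow> nat) \<Rightarrow> 'k) set. Eop d f = 0}"
proof -
  have "{f \<in> kerE d j. \<forall>s. s permutes {0,1,2::nat} \<longrightarrow> act s f = fscale (of_int (sign s)) f}
      = {f \<in> isotypic d j (\<lambda>s. of_int (sign s)) :: ((nat \<Rightarrow> nat) \<Rightarrow> 'k) set. Eop d f = 0}"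
    by (auto simp: kerE_def isotypic_def Emap_eq_Eop)
  then show ?thesis by (simp add: sgn_mult_def)
qed

lemma triv_eq_dim_ker_Eop:
  "triv (K :: 'k::field itself) d (int j)
    = vs.dim {f \<in> isotypic d j (\<lambda>_. 1) :: ((nat \<Rightarrow> nat) \<Rightarrow> 'k) set. Eop d f = 0}"
proof -
  have "fscale 1 f = f" for f :: "(nat \<Rightarrow> nat) \<Rightarrow> 'k" by (simp add: fscale_def)
  then have "{f \<in> kerE d j. \<forall>s. s permutes {0,1,2::nat} \<longrightarrow> act s f = f}
      = {f \<in> isotypic d j (\<lambda>_. 1) :: ((nat \<Rightarrow> nat) \<Rightarrow> 'k) set. Eop d f = 0}"
    by (auto simp: kerE_def isotypic_def Emap_eq_Eop)
  then show ?thesis by (simp add: triv_def)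
qed

lemma strict_mons_eq_empty: "j < 3 \<Longrightarrow> strict_mons d j = {}"
  by (auto simp: strict_mons_def mons_def)

lemma sgn_mult_eq_card_diff:
  fixes K :: "'k::field_char_0 itself"
  assumes "2 * j \<le> 3 * (d - 1)"
  shows "sgn_mult K d (int j) = card (strict_mons d j) - card (strict_mons d (j - 1))"
proof (cases "j = 0")
  case True
  then show ?thesis
    unfolding sgn_mult_eq_dim_ker_Eop True ker_Eop_isotypic_0 dim_isotypic_sign
    using strict_mons_eq_empty by simp
next
  case False
  then have "2 * (j - 1) < 3 * (d - 1)" using assms by linarith
  with False show ?thesis
    unfolding sgn_mult_eq_dim_ker_Eop by (simp add: dim_ker_Eop_isotypic dim_isotypic_sign)
qed

lemma triv_eq_card_diff:
  fixes K :: "'k::field_char_0 itself"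
  assumes "2 * j \<le> 3 * (d - 1)"
  shows "triv K d (int j)
    = card (sorted_mons d j) - (if j = 0 then 0 else card (sorted_mons d (j - 1)))"
proof (cases "j = 0")
  case True
  then show ?thesis
    unfolding triv_eq_dim_ker_Eop True ker_Eop_isotypic_0 dim_isotypic_triv by simp
next
  case False
  then have "2 * (j - 1) < 3 * (d - 1)" using assms by linarith
  with False show ?thesis
    unfolding triv_eq_dim_ker_Eop by (simp add: dim_ker_Eop_isotypic dim_isotypic_triv)
qed

lemma mem_mons_iff:
  "b \<in> mons d j \<longleftrightarrow> b 0 < d \<and> b 1 < d \<and> b 2 < d \<and> (\<forall>i\<ge>3. b i = 0) \<and> b 0 + b 1 + b 2 = j"
  by (auto simp: mons_def dest: less_3_cases)

lemma card_strict_mons_shift: "card (strict_mons d (j + 3)) = card (sorted_mons (d - 2) j)"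
proof (rule bij_betw_same_card)
  show "bij_betw (\<lambda>r. r(0 := r 0 - 2, 1 := r 1 - 1))
      (strict_mons d (j + 3)) (sorted_mons (d - 2) j)"
    by (rule bij_betw_byWitness[where f' = "\<lambda>r. r(0 := r 0 + 2, 1 := r 1 + 1)"])
      (auto simp: strict_mons_def sorted_mons_def mem_mons_iff fun_eq_iff)
qed

theorem proposition4p1:
  fixes K :: "'k::field_char_0 itself" and d j :: nat
  assumes "alg_closed K"
    and "d \<ge> 3"
    and "j \<le> (3 * (d - 1)) div 2"
  shows "sgn_mult K d (int j) = triv K (d - 2) (int j - 3)"
proof -
  have j: "2 * j \<le> 3 * (d - 1)" using assms(3) by linarith
  have sgn: "sgn_mult K d (int j) = card (strict_mons d j) - card (strict_mons d (j - 1))"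
    using j by (rule sgn_mult_eq_card_diff)
  show ?thesis
  proof (cases "j < 3")
    case True
    then show ?thesis unfolding sgn using strict_mons_eq_empty by (simp add: triv_def)
  next
    case False
    then obtain i where i: "j = i + 3" by (metis add.commute le_Suc_ex not_less numeral_3_eq_3)
    have "2 * i \<le> 3 * (d - 2 - 1)" using i j assms(2) by linarith
    then have triv: "triv K (d - 2) (int j - 3)
        = card (sorted_mons (d - 2) i) - (if i = 0 then 0 else card (sorted_mons (d - 2) (i - 1)))"
      using triv_eq_card_diff[of i "d - 2" K] i by simp
    have "card (strict_mons d (j - 1)) = (if i = 0 then 0 else card (sorted_mons (d - 2) (i - 1)))"
    proof (cases "i = 0")
      case False
      then have "j - 1 = (i - 1) + 3" using i by simp
      then show ?thesis using False by (simp only: card_strict_mons_shift) simp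
    qed (simp add: i strict_mons_eq_empty)
    moreover have "card (strict_mons d j) = card (sorted_mons (d - 2) i)"
      unfolding i by (rule card_strict_mons_shift)
    ultimately show ?thesis unfolding sgn triv by simp
  qed
qed

end
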